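(* Let $f:\mathbb{R}^n\to\mathbb{R}$ be a continuously differentiable convex function, and $s$ a positive integer. Let $h(x)=\sum_{i=1}^n h_i(x_i)$ with each $h_i:\mathbb{R}\to\mathbb{R}$ convex and continuously differentiable, with $h$ supercoercive ($\lim_{\|x\|\to\infty}h(x)/\|x\|=\infty$), and assume: (i) if $x_k\to x$ then $D_h(x,x_k)\to0$; (ii) if $D_h(x,x_k)\to0$ for some $x$, then $x_k\to x$; (iii) if $D_h(x_{k+1},x_k)\to0$ then $\|x_{k+1}-x_k\|\to0$. Assume $L_hh-f$ is convex for some $L_h>0$ and $L>L_h$. Let $(x_k)$ be generated by the BPG algorithm with $h$ and $L$, and assume $(x_k)$ is bounded. Then $f(x_k)$ converges to a limit $f^*$ and there exist $K\in\mathbb{N}$ and $c>0$ such that $f(x_k)-f^*\le c/k$ for all $k\ge K$.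
   Context: $C_s=\{x\in\mathbb{R}^n:\|x\|_0\le s\}$ where $\|x\|_0$ is the number of nonzero entries. $D_h(y,x)=h(y)-h(x)-\nabla h(x)^T(y-x)$. BPG algorithm: start from $x_0\in C_s$ and for $k\ge0$ pick $x_{k+1}\in\operatorname{argmin}_{x\in C_s}\ \nabla f(x_k)^T(x-x_k)+LD_h(x,x_k)$. *)

theory Defs
  imports "HOL-Analysis.Analysis"
begin

definition sparse_set :: "nat \<Rightarrow> (real^'n) set" where
  "sparse_set s = {x. card {i. x $ i \<noteq> 0} \<le> s}"

definition bregman :: "(real^'n \<Rightarrow> real) \<Rightarrow> (real^'n \<Rightarrow> real^'n) \<Rightarrow> real^'n \<Rightarrow> real^'n \<Rightarrow> real" where
  "bregman h gh y x = h y - h x - inner (gh x) (y - x)"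

definition sep_fun :: "('n::finite \<Rightarrow> real \<Rightarrow> real) \<Rightarrow> real^'n \<Rightarrow> real" where
  "sep_fun hi x = (\<Sum>i\<in>UNIV. hi i (x $ i))"

definition sep_grad :: "('n::finite \<Rightarrow> real \<Rightarrow> real) \<Rightarrow> real^'n \<Rightarrow> real^'n" where
  "sep_grad dhi x = (\<chi> i. dhi i (x $ i))"

definition bpg_seq :: "(real^'n \<Rightarrow> real^'n) \<Rightarrow> (real^'n \<Rightarrow> real) \<Rightarrow> (real^'n \<Rightarrow> real^'n)
     \<Rightarrow> real \<Rightarrow> nat \<Rightarrow> (nat \<Rightarrow> real^'n) \<Rightarrow> bool" where
  "bpg_seq gf h gh L s x \<longleftrightarrow> x 0 \<in> sparse_set s \<and>
     (\<forall>k. x (Suc k) \<in> sparse_set s \<and>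
        (\<forall>y\<in>sparse_set s.
           inner (gf (x k)) (x (Suc k) - x k) + L * bregman h gh (x (Suc k)) (x k)
           \<le> inner (gf (x k)) (y - x k) + L * bregman h gh y (x k)))"

end

theory Submission
  imports Defs
begin

(* Relative smoothness (convexity of Lh h - f) together with the optimality of x(k+1) against the
   feasible candidate x k gives sufficient decrease f(x(k+1)) <= f(x k) - (L - Lh) D_h(x(k+1), x k).
   Hence f(x k) decreases to some fstar, D_h(x(k+1), x k) -> 0, and by (iii) the steps vanish.
   Let z be a cluster point, so f z = fstar. As h is separable, the subproblem is a coordinatewise
   minimisation on the support of x(k+1), so x(k+1) is stationary in each of those coordinates.
   Whenever supp z is contained in supp x(k+1), the three-point identity and convexity of f then give
     f(x(k+1)) - f z <= L (D_h(z, x k) - D_h(z, x(k+1))).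
   By (ii), once D_h(z, x k) is small, x k is close to z, hence so is x(k+1) (small steps), and its
   support contains supp z; the inequality then makes D_h(z, x(k+1)) smaller still, so from some K0
   on (found along the subsequence, using (i)) the iterates stay trapped. Telescoping, with f(x k)
   decreasing, bounds (k - K0) (f(x k) - fstar) by L D_h(z, x K0). *)

definition vec_support :: "real^'n \<Rightarrow> 'n set" where
  "vec_support x = {i. x $ i \<noteq> 0}"

lemma sparse_set_iff_card_support: "x \<in> sparse_set s \<longleftrightarrow> card (vec_support x) \<le> s"
  by (simp add: sparse_set_def vec_support_def)

lemma convex_on_above_tangent:
  fixes F :: "'a::real_normed_vector \<Rightarrow> real"
  assumes cv: "convex_on UNIV F" and der: "(F has_derivative F') (at x)"
  shows "F x + F' (y - x) \<le> F y"
proof -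
  define \<psi> where "\<psi> t = F (x + t *\<^sub>R (y - x))" for t
  have "convex_on UNIV \<psi>"
  proof (rule convex_onI)
    fix u a b :: real assume "0 < u" "u < 1"
    have "x + ((1 - u) *\<^sub>R a + u *\<^sub>R b) *\<^sub>R (y - x)
        = (1 - u) *\<^sub>R (x + a *\<^sub>R (y - x)) + u *\<^sub>R (x + b *\<^sub>R (y - x))"
      by (simp add: algebra_simps)
    then show "\<psi> ((1 - u) *\<^sub>R a + u *\<^sub>R b) \<le> (1 - u) * \<psi> a + u * \<psi> b"
      unfolding \<psi>_def using convex_onD[OF cv, of u] \<open>0 < u\<close> \<open>u < 1\<close> by auto
  qed auto
  moreover have "(\<psi> has_real_derivative F' (y - x)) (at 0)"
  proof -
    have "((\<lambda>t. x + t *\<^sub>R (y - x)) has_derivative (\<lambda>t. t *\<^sub>R (y - x))) (at 0)"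
      by (auto intro!: derivative_eq_intros)
    from has_derivative_compose[OF this, of F F'] der
    have "(\<psi> has_derivative (\<lambda>t. F' (t *\<^sub>R (y - x)))) (at 0)"
      unfolding \<psi>_def by (simp add: o_def)
    moreover have "(\<lambda>t. F' (t *\<^sub>R (y - x))) = (\<lambda>t. F' (y - x) * t)"
      using has_derivative_linear[OF der] by (simp add: linear_scale mult.commute)
    ultimately show ?thesis by (simp add: has_field_derivative_def)
  qed
  ultimately have "F' (y - x) \<le> \<psi> 1 - \<psi> 0"
    using convex_on_imp_above_tangent[of UNIV \<psi> 0 1] by auto
  then show ?thesis unfolding \<psi>_def by simp
qed

lemma bregman_three_point:
  "bregman h gh z x - bregman h gh z y - bregman h gh y x = inner (gh y - gh x) (z - y)"
  by (simp add: bregman_def inner_diff_left inner_diff_right)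

lemma bregman_sep_fun:
  "bregman (sep_fun hi) (sep_grad dhi) y z =
     (\<Sum>i\<in>UNIV. hi i (y $ i) - hi i (z $ i) - dhi i (z $ i) * (y $ i - z $ i))"
  by (simp add: bregman_def sep_fun_def sep_grad_def inner_vec_def sum_subtractf)

lemma bregman_sep_fun_nonneg:
  assumes "\<And>i t. (hi i has_real_derivative dhi i t) (at t)" and "\<And>i. convex_on UNIV (hi i)"
  shows "0 \<le> bregman (sep_fun hi) (sep_grad dhi) y z"
  unfolding bregman_sep_fun
proof (rule sum_nonneg)
  fix i
  show "0 \<le> hi i (y $ i) - hi i (z $ i) - dhi i (z $ i) * (y $ i - z $ i)"
    using convex_on_imp_above_tangent[of UNIV "hi i" "z $ i" "y $ i"] assms by auto
qed

lemma has_derivative_sep_fun: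
  assumes "\<And>i t. (hi i has_real_derivative dhi i t) (at t)"
  shows "(sep_fun hi has_derivative (\<lambda>v. inner (sep_grad dhi z) v)) (at z)"
proof -
  have "((\<lambda>y. \<Sum>i\<in>UNIV. hi i (y $ i)) has_derivative (\<lambda>v. \<Sum>i\<in>UNIV. dhi i (z $ i) * v $ i)) (at z)"
  proof (rule has_derivative_sum)
    fix i
    have "((\<lambda>y. y $ i) has_derivative (\<lambda>v. v $ i)) (at z)"
      using bounded_linear_imp_has_derivative[OF bounded_linear_vec_nth] .
    from has_derivative_compose[OF this assms[of i "z $ i", unfolded has_field_derivative_def]]
    show "((\<lambda>y. hi i (y $ i)) has_derivative (\<lambda>v. dhi i (z $ i) * v $ i)) (at z)"
      by (simp add: o_def mult.commute)
  qed
  then show ?thesis by (simp add: sep_fun_def[abs_def] sep_grad_def inner_vec_def)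
qed

lemma relative_smoothness_descent:
  fixes f h :: "real^'n \<Rightarrow> real"
  assumes f_der: "(f has_derivative (\<lambda>v. inner (gf x) v)) (at x)"
    and h_der: "(h has_derivative (\<lambda>v. inner (gh x) v)) (at x)"
    and cv: "convex_on UNIV (\<lambda>z. Lh * h z - f z)"
  shows "f y \<le> f x + inner (gf x) (y - x) + Lh * bregman h gh y x"
proof -
  have "((\<lambda>z. Lh * h z - f z) has_derivative (\<lambda>v. Lh * inner (gh x) v - inner (gf x) v)) (at x)"
    by (intro has_derivative_diff has_derivative_mult_right h_der f_der)
  from convex_on_above_tangent[OF cv this, of y] show ?thesis
    by (simp add: bregman_def right_diff_distrib)
qed

lemma sparse_bregman_prox_stationary:
  fixes g xk x1 :: "real^'n"
  assumes hi_deriv: "\<And>i t. (hi i has_real_derivative dhi i t) (at t)"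
    and x1: "x1 \<in> sparse_set s"
    and x1_min: "\<And>y. y \<in> sparse_set s \<Longrightarrow>
      inner g (x1 - xk) + L * bregman (sep_fun hi) (sep_grad dhi) x1 xk
        \<le> inner g (y - xk) + L * bregman (sep_fun hi) (sep_grad dhi) y xk"
    and i: "i \<in> vec_support x1"
  shows "g $ i + L * (dhi i (x1 $ i) - dhi i (xk $ i)) = 0"
proof -
  define \<phi> where "\<phi> j t = g $ j * (t - xk $ j)
      + L * (hi j t - hi j (xk $ j) - dhi j (xk $ j) * (t - xk $ j))" for j t
  have objective: "inner g (y - xk) + L * bregman (sep_fun hi) (sep_grad dhi) y xk
      = (\<Sum>j\<in>UNIV. \<phi> j (y $ j))" for y
    unfolding \<phi>_def bregman_sep_fun inner_vec_def
    by (simp add: sum_distrib_left sum.distrib[symmetric] algebra_simps)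
  have "\<phi> i (x1 $ i) \<le> \<phi> i t" for t
  proof -
    define y where "y = (\<chi> j. if j = i then t else x1 $ j)"
    have "vec_support y \<subseteq> vec_support x1"
      using i by (auto simp: y_def vec_support_def)
    then have "y \<in> sparse_set s"
      using x1 card_mono[of "vec_support x1" "vec_support y"]
      by (simp add: sparse_set_iff_card_support)
    then have "(\<Sum>j\<in>UNIV. \<phi> j (x1 $ j)) \<le> (\<Sum>j\<in>UNIV. \<phi> j (y $ j))"
      using x1_min by (simp add: objective)
    moreover have "(\<Sum>j\<in>UNIV. \<phi> j (y $ j)) = \<phi> i t + (\<Sum>j\<in>UNIV - {i}. \<phi> j (x1 $ j))"
      by (simp add: sum.remove[of UNIV i] y_def)
    moreover have "(\<Sum>j\<in>UNIV. \<phi> j (x1 $ j)) = \<phi> i (x1 $ i) + (\<Sum>j\<in>UNIV - {i}. \<phi> j (x1 $ j))"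
      by (simp add: sum.remove[of UNIV i])
    ultimately show ?thesis by simp
  qed
  moreover have "(\<phi> i has_real_derivative g $ i + L * (dhi i (x1 $ i) - dhi i (xk $ i))) (at (x1 $ i))"
    unfolding \<phi>_def by (auto intro!: derivative_eq_intros hi_deriv simp: algebra_simps)
  ultimately show ?thesis
    by (intro DERIV_local_min[of _ _ _ 1]) auto
qed

lemma open_support_superset: "open {y::real^'n. vec_support z \<subseteq> vec_support y}"
proof -
  have "{y::real^'n. vec_support z \<subseteq> vec_support y} = (\<Inter>i\<in>vec_support z. {y. y $ i \<noteq> 0})"
    by (auto simp: vec_support_def)
  then show ?thesis
    by (auto intro!: open_INT open_Collect_neq continuous_intros)
qed

lemma small_divergence_imp_in_open:
  fixes \<phi> :: "'a::topological_space \<Rightarrow> real"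
  assumes nonneg: "\<And>y. 0 \<le> \<phi> y"
    and recover: "\<And>ys. (\<lambda>m. \<phi> (ys m)) \<longlonglongrightarrow> 0 \<Longrightarrow> ys \<longlonglongrightarrow> z"
    and "open U" "z \<in> U"
  obtains \<epsilon> where "0 < \<epsilon>" "\<And>y. \<phi> y < \<epsilon> \<Longrightarrow> y \<in> U"
proof -
  have "\<exists>\<epsilon>>0. \<forall>y. \<phi> y < \<epsilon> \<longrightarrow> y \<in> U"
  proof (rule ccontr)
    assume "\<not> ?thesis"
    then have "\<forall>m. \<exists>y. \<phi> y < inverse (real (Suc m)) \<and> y \<notin> U"
      by (metis inverse_positive_iff_positive of_nat_0_less_iff zero_less_Suc)
    then obtain ys where ys: "\<And>m. \<phi> (ys m) < inverse (real (Suc m))" "\<And>m. ys m \<notin> U"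
      by metis
    have "(\<lambda>m. \<phi> (ys m)) \<longlonglongrightarrow> 0"
    proof (rule real_tendsto_sandwich[where f="\<lambda>_. 0" and h="\<lambda>m. inverse (real (Suc m))"])
      show "\<forall>\<^sub>F m in sequentially. \<phi> (ys m) \<le> inverse (real (Suc m))"
        using ys(1) less_imp_le by (intro always_eventually allI) blast
    qed (use nonneg LIMSEQ_inverse_real_of_nat in auto)
    then have "eventually (\<lambda>m. ys m \<in> U) sequentially"
      using recover topological_tendstoD \<open>open U\<close> \<open>z \<in> U\<close> by blast
    then show False using ys(2) by auto
  qed
  then show ?thesis using that by blast
qed

lemma support_kept_along_small_steps:
  fixes x :: "nat \<Rightarrow> real^'n" and \<phi> :: "real^'n \<Rightarrow> real"
  assumes steps: "(\<lambda>k. norm (x (Suc k) - x k)) \<longlonglongrightarrow> 0"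
    and nonneg: "\<And>y. 0 \<le> \<phi> y"
    and recover: "\<And>ys. (\<lambda>m. \<phi> (ys m)) \<longlonglongrightarrow> 0 \<Longrightarrow> ys \<longlonglongrightarrow> z"
  obtains \<epsilon> K where "0 < \<epsilon>"
    "\<And>k. K \<le> k \<Longrightarrow> \<phi> (x k) < \<epsilon> \<Longrightarrow> vec_support z \<subseteq> vec_support (x (Suc k))"
proof -
  obtain \<delta> where "0 < \<delta>" and \<delta>: "ball z \<delta> \<subseteq> {y. vec_support z \<subseteq> vec_support y}"
    using open_support_superset[of z] open_contains_ball by blast
  obtain \<epsilon> where "0 < \<epsilon>" and \<epsilon>: "\<And>y. \<phi> y < \<epsilon> \<Longrightarrow> y \<in> ball z (\<delta>/2)"
    by (rule small_divergence_imp_in_open[where \<phi>=\<phi> and z=z and U="ball z (\<delta>/2)"])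
      (use nonneg recover \<open>0 < \<delta>\<close> in auto)
  obtain K where K: "\<And>k. K \<le> k \<Longrightarrow> norm (x (Suc k) - x k) < \<delta>/2"
    using LIMSEQ_D[OF steps, of "\<delta>/2"] \<open>0 < \<delta>\<close> by fastforce
  have "vec_support z \<subseteq> vec_support (x (Suc k))" if "K \<le> k" "\<phi> (x k) < \<epsilon>" for k
  proof -
    have "dist z (x k) < \<delta>/2" using \<epsilon>[OF that(2)] by simp
    moreover have "dist (x k) (x (Suc k)) < \<delta>/2"
      using K[OF that(1)] by (simp add: dist_norm norm_minus_commute)
    ultimately have "x (Suc k) \<in> ball z \<delta>"
      using dist_triangle[of z "x (Suc k)" "x k"] by simp
    then show ?thesis using \<delta> by auto
  qed
  with \<open>0 < \<epsilon>\<close> that show ?thesis by blast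
qed

lemma subseq_tendsto_zero_obtain_late_small:
  fixes a :: "nat \<Rightarrow> real"
  assumes "strict_mono r" and "(\<lambda>j. a (r j)) \<longlonglongrightarrow> 0" and "0 < \<epsilon>"
  obtains K0 where "K \<le> K0" "a K0 < \<epsilon>"
proof -
  obtain N where N: "\<And>j. N \<le> j \<Longrightarrow> a (r j) < \<epsilon>"
    using order_tendstoD(2)[OF assms(2,3)] by (auto simp: eventually_sequentially)
  show ?thesis
    using that[of "r (max N K)"] seq_suble[OF assms(1), of "max N K"] N[of "max N K"] by simp
qed

lemma telescoping_bound_imp_rate:
  fixes a d :: "nat \<Rightarrow> real"
  assumes dec: "decseq a" and a_nonneg: "\<And>k. 0 \<le> a k" and d_nonneg: "\<And>k. 0 \<le> d k"
    and tele: "\<And>k. K \<le> k \<Longrightarrow> a (Suc k) \<le> d k - d (Suc k)"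
  shows "\<exists>K' c. 0 < c \<and> (\<forall>k\<ge>K'. a k \<le> c / real k)"
proof -
  have partial: "real n * a (K + n) \<le> d K - d (K + n)" for n
  proof (induction n)
    case 0
    then show ?case by simp
  next
    case (Suc n)
    have "real n * a (K + Suc n) \<le> real n * a (K + n)"
      using dec by (intro mult_left_mono) (auto simp: decseq_Suc_iff)
    with Suc.IH tele[of "K + n"] show ?case by (simp add: algebra_simps)
  qed
  have "a k \<le> (2 * d K + 1) / real k" if k: "2 * K + 1 \<le> k" for k
  proof -
    define n where "n = k - K"
    have "real k * a k \<le> 2 * real n * a k"
      using k a_nonneg[of k] by (intro mult_right_mono) (auto simp: n_def)
    also have "\<dots> \<le> 2 * d K"
      using partial[of n] d_nonneg[of k] k by (simp add: n_def algebra_simps)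
    finally show ?thesis
      using k by (simp add: field_simps)
  qed
  moreover have "0 < 2 * d K + 1" using d_nonneg[of K] by simp
  ultimately show ?thesis by blast
qed

locale sparse_bpg =
  fixes f :: "real^'n::finite \<Rightarrow> real" and gf :: "real^'n \<Rightarrow> real^'n"
    and hi dhi :: "'n \<Rightarrow> real \<Rightarrow> real"
    and s :: nat and Lh L :: real and x :: "nat \<Rightarrow> real^'n"
  assumes f_grad: "\<And>z. (f has_derivative (\<lambda>v. inner (gf z) v)) (at z)"
    and f_convex: "convex_on UNIV f"
    and hi_deriv: "\<And>i t. (hi i has_real_derivative dhi i t) (at t)"
    and hi_convex: "\<And>i. convex_on UNIV (hi i)"
    and rel_smooth: "convex_on UNIV (\<lambda>z. Lh * sep_fun hi z - f z)"
    and Lh_less_L: "Lh < L"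
    and L_pos: "0 < L"
    and bpg: "bpg_seq gf (sep_fun hi) (sep_grad dhi) L s x"
begin

abbreviation Dh :: "real^'n \<Rightarrow> real^'n \<Rightarrow> real" where
  "Dh \<equiv> bregman (sep_fun hi) (sep_grad dhi)"

lemma Dh_nonneg: "0 \<le> Dh y z"
  by (rule bregman_sep_fun_nonneg[OF hi_deriv hi_convex])

lemma iterate_sparse: "x k \<in> sparse_set s"
  using bpg unfolding bpg_seq_def by (cases k) auto

lemma iterate_optimal:
  "y \<in> sparse_set s \<Longrightarrow> inner (gf (x k)) (x (Suc k) - x k) + L * Dh (x (Suc k)) (x k)
     \<le> inner (gf (x k)) (y - x k) + L * Dh y (x k)"
  using bpg unfolding bpg_seq_def by blast

lemma descent: "f y \<le> f z + inner (gf z) (y - z) + Lh * Dh y z"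
  by (rule relative_smoothness_descent[OF f_grad has_derivative_sep_fun[OF hi_deriv] rel_smooth])

lemma sufficient_decrease: "f (x (Suc k)) \<le> f (x k) - (L - Lh) * Dh (x (Suc k)) (x k)"
proof -
  have "inner (gf (x k)) (x (Suc k) - x k) + L * Dh (x (Suc k)) (x k) \<le> 0"
    using iterate_optimal[OF iterate_sparse, of k k] by (simp add: bregman_def)
  with descent[of "x (Suc k)" "x k"] show ?thesis by (simp add: left_diff_distrib)
qed

lemma decseq_objective: "decseq (\<lambda>k. f (x k))"
proof (rule decseq_SucI)
  fix k
  show "f (x (Suc k)) \<le> f (x k)"
    using sufficient_decrease[of k] Dh_nonneg[of "x (Suc k)" "x k"] Lh_less_L
      mult_nonneg_nonneg[of "L - Lh" "Dh (x (Suc k)) (x k)"] by linarith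
qed

lemma continuous_objective: "continuous_on UNIV f"
  using has_derivative_continuous[OF f_grad] by (simp add: continuous_at_imp_continuous_on)

lemma objective_converges:
  assumes "bounded (range x)"
  obtains fstar where "(\<lambda>k. f (x k)) \<longlonglongrightarrow> fstar" "\<And>k. fstar \<le> f (x k)"
proof -
  have "compact (f ` closure (range x))"
    using assms continuous_on_subset[OF continuous_objective subset_UNIV]
    by (intro compact_continuous_image) (auto simp: compact_eq_bounded_closed)
  then have "bdd_below (f ` closure (range x))"
    by (intro bounded_imp_bdd_below compact_imp_bounded)
  then obtain B where B: "\<And>y. y \<in> f ` closure (range x) \<Longrightarrow> B \<le> y"
    by (auto simp: bdd_below_def)
  have "B \<le> f (x k)" for k
    by (rule B[OF imageI[OF closure_subset[THEN subsetD, OF rangeI]]])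
  then show ?thesis
    using decseq_convergent[OF decseq_objective] that by blast
qed

lemma step_divergence_tendsto_zero:
  assumes flim: "(\<lambda>k. f (x k)) \<longlonglongrightarrow> fstar"
  shows "(\<lambda>k. Dh (x (Suc k)) (x k)) \<longlonglongrightarrow> 0"
proof (rule real_tendsto_sandwich[where f="\<lambda>_. 0" and h="\<lambda>k. (f (x k) - f (x (Suc k))) / (L - Lh)"])
  show "\<forall>\<^sub>F k in sequentially. Dh (x (Suc k)) (x k) \<le> (f (x k) - f (x (Suc k))) / (L - Lh)"
  proof (intro always_eventually allI)
    fix k
    have "(L - Lh) * Dh (x (Suc k)) (x k) \<le> f (x k) - f (x (Suc k))"
      using sufficient_decrease[of k] by linarith
    then show "Dh (x (Suc k)) (x k) \<le> (f (x k) - f (x (Suc k))) / (L - Lh)"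
      using Lh_less_L by (simp add: pos_le_divide_eq mult.commute)
  qed
  have "(\<lambda>k. f (x k) - f (x (Suc k))) \<longlonglongrightarrow> fstar - fstar"
    using flim LIMSEQ_Suc[OF flim] by (intro tendsto_diff)
  then show "(\<lambda>k. (f (x k) - f (x (Suc k))) / (L - Lh)) \<longlonglongrightarrow> 0"
    by (simp add: tendsto_divide_zero)
qed (use Dh_nonneg in auto)

lemma step_bound:
  assumes supp: "vec_support z \<subseteq> vec_support (x (Suc k))"
  shows "f (x (Suc k)) - f z \<le> L * Dh z (x k) - L * Dh z (x (Suc k))"
proof -
  define g where "g = gf (x k)"
  define x1 where "x1 = x (Suc k)"
  define xk where "xk = x k"
  have coord: "(g + L *\<^sub>R (sep_grad dhi x1 - sep_grad dhi xk)) $ i * (z - x1) $ i = 0" for i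
  proof (cases "i \<in> vec_support x1")
    case True
    then have "g $ i + L * (dhi i (x1 $ i) - dhi i (xk $ i)) = 0"
      using sparse_bregman_prox_stationary[OF hi_deriv iterate_sparse iterate_optimal]
      unfolding g_def x1_def xk_def by blast
    then show ?thesis by (simp add: sep_grad_def)
  next
    case False
    then show ?thesis using supp by (auto simp: vec_support_def x1_def)
  qed
  have "inner (g + L *\<^sub>R (sep_grad dhi x1 - sep_grad dhi xk)) (z - x1) = 0"
    unfolding inner_vec_def inner_real_def using coord by (intro sum.neutral) blast
  then have "inner g (z - x1) = - L * inner (sep_grad dhi x1 - sep_grad dhi xk) (z - x1)"
    by (simp add: inner_add_left)
  also have "\<dots> = - L * (Dh z xk - Dh z x1 - Dh x1 xk)"
    by (simp only: bregman_three_point)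
  finally have orth: "inner g (z - x1) = L * Dh x1 xk + L * Dh z x1 - L * Dh z xk"
    by (simp add: algebra_simps)
  have "f xk + inner g (z - xk) \<le> f z"
    using convex_on_above_tangent[OF f_convex f_grad] unfolding g_def xk_def .
  moreover have "f x1 \<le> f xk + inner g (x1 - xk) + L * Dh x1 xk"
    using descent[of x1 xk] Dh_nonneg[of x1 xk] Lh_less_L mult_right_mono[of Lh L "Dh x1 xk"]
    unfolding g_def xk_def by simp
  moreover have "inner g (x1 - xk) = inner g (z - xk) - inner g (z - x1)"
    by (simp add: inner_diff_right)
  ultimately show ?thesis
    using orth unfolding x1_def xk_def by linarith
qed

lemma trapped_step_bound:
  assumes below: "\<And>k. f z \<le> f (x k)"
    and keep: "\<And>k. K \<le> k \<Longrightarrow> Dh z (x k) < \<epsilon> \<Longrightarrow> vec_support z \<subseteq> vec_support (x (Suc k))"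
    and "K \<le> K0" and start: "Dh z (x K0) < \<epsilon>"
    and "K0 \<le> k"
  shows "f (x (Suc k)) - f z \<le> L * Dh z (x k) - L * Dh z (x (Suc k))"
proof -
  have keep': "vec_support z \<subseteq> vec_support (x (Suc k))" if "K0 \<le> k" "Dh z (x k) < \<epsilon>" for k
    using keep \<open>K \<le> K0\<close> that by simp
  have trapped: "Dh z (x k) < \<epsilon>" if "K0 \<le> k" for k
    using that
  proof (induction k rule: dec_induct)
    case base
    then show ?case by (rule start)
  next
    case (step k)
    have "0 \<le> L * (Dh z (x k) - Dh z (x (Suc k)))"
      using step_bound[OF keep'[OF step.hyps(1) step.IH]] below[of "Suc k"]
      by (simp add: right_diff_distrib)
    then show ?case using step.IH L_pos by (simp add: zero_le_mult_iff)
  qed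
  show ?thesis by (rule step_bound[OF keep'[OF \<open>K0 \<le> k\<close> trapped[OF \<open>K0 \<le> k\<close>]]])
qed

end

theorem corollaryA6:
  fixes f :: "real^'n::finite \<Rightarrow> real" and gf :: "real^'n \<Rightarrow> real^'n"
    and hi dhi :: "'n \<Rightarrow> real \<Rightarrow> real"
    and s :: nat and Lh L :: real and x :: "nat \<Rightarrow> real^'n"
  assumes f_grad: "\<And>z. (f has_derivative (\<lambda>v. inner (gf z) v)) (at z)"
    and f_C1: "continuous_on UNIV gf"
    and f_convex: "convex_on UNIV f"
    and s_pos: "s \<ge> 1"
    and hi_deriv: "\<And>i t. (hi i has_real_derivative dhi i t) (at t)"
    and hi_C1: "\<And>i. continuous_on UNIV (dhi i)"
    and hi_convex: "\<And>i. convex_on UNIV (hi i)"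
    and h_supercoercive: "filterlim (\<lambda>z. sep_fun hi z / norm z) at_top at_infinity"
    and cond_i: "\<And>z xs. xs \<longlonglongrightarrow> z \<Longrightarrow>
        (\<lambda>k. bregman (sep_fun hi) (sep_grad dhi) z (xs k)) \<longlonglongrightarrow> 0"
    and cond_ii: "\<And>z xs. (\<lambda>k. bregman (sep_fun hi) (sep_grad dhi) z (xs k)) \<longlonglongrightarrow> 0 \<Longrightarrow>
        xs \<longlonglongrightarrow> z"
    and cond_iii: "\<And>xs. (\<lambda>k. bregman (sep_fun hi) (sep_grad dhi) (xs (Suc k)) (xs k)) \<longlonglongrightarrow> 0
        \<Longrightarrow> (\<lambda>k. norm (xs (Suc k) - xs k)) \<longlonglongrightarrow> 0"
    and Lh_pos: "Lh > 0"
    and rel_smooth: "convex_on UNIV (\<lambda>z. Lh * sep_fun hi z - f z)"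
    and L_gt: "L > Lh"
    and bpg: "bpg_seq gf (sep_fun hi) (sep_grad dhi) L s x"
    and bdd: "bounded (range x)"
  shows "\<exists>fstar. (\<lambda>k. f (x k)) \<longlonglongrightarrow> fstar \<and>
           (\<exists>K c. c > 0 \<and> (\<forall>k\<ge>K. f (x k) - fstar \<le> c / real k))"
proof -
  interpret sparse_bpg f gf hi dhi s Lh L x
    by unfold_locales (use f_grad f_convex hi_deriv hi_convex rel_smooth L_gt Lh_pos bpg in auto)
  obtain fstar where flim: "(\<lambda>k. f (x k)) \<longlonglongrightarrow> fstar" and below: "\<And>k. fstar \<le> f (x k)"
    using objective_converges[OF bdd] by blast
  obtain z r where r: "strict_mono r" and xr: "(x \<circ> r) \<longlonglongrightarrow> z"
    using bounded_imp_convergent_subsequence[OF bdd] by blast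
  have fz: "f z = fstar"
    using continuous_on_tendsto_compose[OF continuous_objective xr] LIMSEQ_subseq_LIMSEQ[OF flim r]
    by (auto simp: o_def intro: LIMSEQ_unique)
  have steps: "(\<lambda>k. norm (x (Suc k) - x k)) \<longlonglongrightarrow> 0"
    by (rule cond_iii[OF step_divergence_tendsto_zero[OF flim]])
  obtain \<epsilon> K where "0 < \<epsilon>"
    and keep: "\<And>k. K \<le> k \<Longrightarrow> Dh z (x k) < \<epsilon> \<Longrightarrow> vec_support z \<subseteq> vec_support (x (Suc k))"
    using support_kept_along_small_steps[where \<phi>="Dh z", OF steps Dh_nonneg cond_ii] by blast
  have "(\<lambda>j. Dh z (x (r j))) \<longlonglongrightarrow> 0"
    using cond_i[OF xr] by (simp add: o_def)
  then obtain K0 where "K \<le> K0" "Dh z (x K0) < \<epsilon>"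
    by (rule subseq_tendsto_zero_obtain_late_small[where a="\<lambda>k. Dh z (x k)", OF r _ \<open>0 < \<epsilon>\<close>])
  have "f (x (Suc k)) - fstar \<le> L * Dh z (x k) - L * Dh z (x (Suc k))" if "K0 \<le> k" for k
    using trapped_step_bound[OF below[folded fz] keep \<open>K \<le> K0\<close> \<open>Dh z (x K0) < \<epsilon>\<close> that] fz
    by simp
  moreover have "decseq (\<lambda>k. f (x k) - fstar)"
    using decseq_objective by (simp add: decseq_def)
  ultimately obtain K' c where "0 < c" "\<forall>k\<ge>K'. f (x k) - fstar \<le> c / real k"
    using telescoping_bound_imp_rate[of "\<lambda>k. f (x k) - fstar" "\<lambda>k. L * Dh z (x k)" K0]
      below Dh_nonneg L_pos by auto
  with flim show ?thesis by blast
qed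

end
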